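(* If $n$ is a non-negative integer, then $$\sum_{k = 1}^n \sum_{j = 0}^{k - 1} (-1)^{k-j+1} F_{n-j} = F_{2(\lfloor (n-1)/2 \rfloor + 1)}$$ and $$\sum_{k = 1}^n \sum_{j = 0}^{k - 1} (-1)^{k-j+1} L_{n-j} = L_{2(\lfloor (n-1)/2 \rfloor + 1)} - 2.$$
   Context: $F_n$ are the Fibonacci numbers ($F_0=0$, $F_1=1$, $F_{n}=F_{n-1}+F_{n-2}$) and $L_n$ the Lucas numbers ($L_0=2$, $L_1=1$, $L_{n}=L_{n-1}+L_{n-2}$). Empty sums are zero. *)

theory Defs
  imports "HOL-Number_Theory.Fib"
begin

fun lucas :: "nat \<Rightarrow> nat" where
  "lucas 0 = 2"
| "lucas (Suc 0) = 1"
| "lucas (Suc (Suc n)) = lucas (Suc n) + lucas n"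

end

theory Submission
  imports Defs
begin

text \<open>In the double sum each \<open>a i\<close> with \<open>1 \<le> i \<le> n\<close> occurs with coefficient an
alternating sum of \<open>i\<close> signs starting with \<open>+1\<close>, i.e. \<open>1\<close> or \<open>0\<close> according to the parity
of \<open>i\<close>. So the double sum is \<open>a 1 + a 3 + a 5 + \<dots>\<close> up to \<open>n\<close>, and both identities follow
by telescoping \<open>F (2i+1) = F (2i+2) - F (2i)\<close>, and likewise for \<open>L\<close>.\<close>

lemma sum_neg_one_power_lessThan:
  "(\<Sum>k<m. (-1::'a::ring_1) ^ k) = (if odd m then 1 else 0)"
  by (induction m) auto

lemma alternating_double_sum_eq_sum_odd:
  fixes a :: "nat \<Rightarrow> 'a::comm_ring_1"
  shows "(\<Sum>k=1..n. \<Sum>j=0..k-1. (-1) ^ (k - j + 1) * a (n - j))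
       = (\<Sum>i=1..n. if odd i then a i else 0)"
proof -
  define S where "S n = (\<Sum>k<n. \<Sum>j<Suc k. (-1) ^ (Suc k - j + 1) * a (n - j))" for n
  have "S n = (\<Sum>i=1..n. if odd i then a i else 0)"
  proof (induction n)
    case 0
    then show ?case by (simp add: S_def)
  next
    case (Suc n)
    have "S (Suc n) = (\<Sum>k<Suc n. (-1) ^ k) * a (Suc n) + S n"
      by (simp add: S_def sum.lessThan_Suc_shift sum.distrib sum_distrib_right distrib_right
          del: sum.lessThan_Suc)
    then show ?case
      by (simp add: Suc.IH sum_neg_one_power_lessThan)
  qed
  moreover have "(\<Sum>k=1..n. \<Sum>j=0..k-1. (-1) ^ (k - j + 1) * a (n - j)) = S n"
    by (simp add: S_def sum.atLeast1_atMost_eq atLeast0AtMost lessThan_Suc_atMost)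
  ultimately show ?thesis by simp
qed

lemma sum_odd_atLeast1AtMost:
  fixes a :: "nat \<Rightarrow> 'a::comm_monoid_add"
  shows "(\<Sum>i=1..n. if odd i then a i else 0) = (\<Sum>i<(n+1) div 2. a (2*i+1))"
proof -
  have "{i\<in>{1..n}. odd i} = (\<lambda>i. 2*i+1) ` {..<(n+1) div 2}"
    by (auto elim!: oddE)
  then show ?thesis
    by (simp add: sum.inter_filter[symmetric] sum.reindex inj_on_def)
qed

lemma sum_fib_odd: "(\<Sum>i<m. fib (2*i+1)) = fib (2*m)"
  by (induction m) (simp_all add: numeral_2_eq_2)

lemma sum_lucas_odd: "(\<Sum>i<m. lucas (2*i+1)) + 2 = lucas (2*m)"
  by (induction m) (simp_all add: numeral_2_eq_2)

lemma nat_two_mul_int_pred_div_two: "nat (2 * ((int n - 1) div 2 + 1)) = 2 * ((n+1) div 2)"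
proof (cases n)
  case (Suc m)
  have "int m div 2 = int (m div 2)"
    by (simp add: zdiv_int)
  then show ?thesis
    using Suc by (simp add: nat_mult_distrib)
qed simp

theorem proposition4:
  fixes n :: nat
  shows "((\<Sum>k=1..n. \<Sum>j=0..k-1. (-1::int) ^ (k - j + 1) * int (fib (n - j)))
           = int (fib (nat (2 * ((int n - 1) div 2 + 1))))) \<and>
         ((\<Sum>k=1..n. \<Sum>j=0..k-1. (-1::int) ^ (k - j + 1) * int (lucas (n - j)))
           = int (lucas (nat (2 * ((int n - 1) div 2 + 1)))) - 2)"
proof -
  define m where "m = (n + 1) div 2"
  have index: "nat (2 * ((int n - 1) div 2 + 1)) = 2 * m"
    unfolding m_def by (rule nat_two_mul_int_pred_div_two)
  have collapse: "(\<Sum>k=1..n. \<Sum>j=0..k-1. (-1) ^ (k - j + 1) * a (n - j)) = (\<Sum>i<m. a (2*i+1))"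
    for a :: "nat \<Rightarrow> int"
    unfolding m_def alternating_double_sum_eq_sum_odd by (rule sum_odd_atLeast1AtMost)
  have "(\<Sum>i<m. int (fib (2*i+1))) = int (fib (2*m))"
    by (simp flip: sum_fib_odd)
  moreover have "(\<Sum>i<m. int (lucas (2*i+1))) = int (lucas (2*m)) - 2"
    by (simp flip: sum_lucas_odd)
  ultimately show ?thesis
    unfolding index collapse[of "\<lambda>i. int (fib i)"] collapse[of "\<lambda>i. int (lucas i)"] by simp
qed

end
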